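(* Let $G$ be a group generated by a finite set $S$, acting by isometries on a geodesic $\delta$-hyperbolic $\mathbb{R}$-metric space $(X,d)$ ($\delta\geqslant0$), and let $x\in X$ with stabilizer $G_x$. Suppose the action is proper relative to $x$ and satisfies $(R2,k)$ for some $k\in\mathbb{N}$. Then $G$ is weakly hyperbolic relative to $G_x$.
   Context: An $\mathbb{R}$-metric space is an ordinary metric space; it is geodesic if any two points are joined by an isometrically embedded real interval; with Gromov product $(y\cdot z)_w=\tfrac12(d(y,w)+d(z,w)-d(y,z))$ it is $\delta$-hyperbolic if $(y\cdot z)_w\geqslant\min\{(y\cdot u)_w,(u\cdot z)_w\}-\delta$ for all $w,y,z,u$. The action satisfies $(R2,k)$ (with respect to $x$) if for all $g,h\in G$ there is $u\in G$ with $d(x,ux)\leqslant(gx\cdot hx)_x+k\delta$, $d(x,u^{-1}gx)\leqslant(g^{-1}x\cdot g^{-1}hx)_x+k\delta$ and $d(x,u^{-1}hx)\leqslant(h^{-1}x\cdot h^{-1}gx)_x+k\delta$. Let $\Gamma(G,S\cup G_x)$ be the Cayley graph of $G$ with respect to the (possibly infinite) generating set $S\cup G_x$, with its path metric. The action is proper relative to $x$ if there is $\alpha>0$ with $d(x,gx)>\alpha$ for every $g\in G\smallsetminus G_x$, and for every $N\in\mathbb{N}$ the set $B_N=\{g\in G: d(x,gx)\leqslant N\}$ is bounded in $\Gamma(G,S\cup G_x)$. $G$ is weakly hyperbolic relative to a subgroup $H$ (in the sense of Farb and Osin) if the Cayley graph $\Gamma(G,S\cup H)$ is a Gromov-hyperbolic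 metric space. *)

theory Defs
  imports "HOL-Analysis.Analysis" "HOL-Algebra.Group_Action" "HOL-Algebra.Generated_Groups"
begin

definition gromov_prod :: "('a \<Rightarrow> 'a \<Rightarrow> real) \<Rightarrow> 'a \<Rightarrow> 'a \<Rightarrow> 'a \<Rightarrow> real" where
  "gromov_prod d w y z = (d y w + d z w - d y z) / 2"

definition gromov_hyperbolic_on :: "'a set \<Rightarrow> ('a \<Rightarrow> 'a \<Rightarrow> real) \<Rightarrow> real \<Rightarrow> bool" where
  "gromov_hyperbolic_on A d \<delta> \<longleftrightarrow>
     (\<forall>w\<in>A. \<forall>y\<in>A. \<forall>z\<in>A. \<forall>u\<in>A.
        gromov_prod d w y z \<ge> min (gromov_prod d w y u) (gromov_prod d w u z) - \<delta>)"

definition geodesic_space :: "'x::metric_space itself \<Rightarrow> bool" where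
  "geodesic_space _ \<longleftrightarrow> (\<forall>y z::'x. \<exists>\<gamma>::real \<Rightarrow> 'x. \<gamma> 0 = y \<and> \<gamma> (dist y z) = z \<and>
      (\<forall>s\<in>{0..dist y z}. \<forall>t\<in>{0..dist y z}. dist (\<gamma> s) (\<gamma> t) = \<bar>s - t\<bar>))"

definition word_length :: "('g, 'b) monoid_scheme \<Rightarrow> 'g set \<Rightarrow> 'g \<Rightarrow> nat" where
  "word_length G T g = (LEAST n. \<exists>ws. length ws = n \<and> set ws \<subseteq> T \<union> ((\<lambda>s. inv\<^bsub>G\<^esub> s) ` T) \<and>
                                   foldr (\<lambda>a b. a \<otimes>\<^bsub>G\<^esub> b) ws \<one>\<^bsub>G\<^esub> = g)"

text \<open>Path metric of the Cayley graph Gamma(G,T), restricted to its vertex set G.\<close>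
definition cayley_dist :: "('g, 'b) monoid_scheme \<Rightarrow> 'g set \<Rightarrow> 'g \<Rightarrow> 'g \<Rightarrow> real" where
  "cayley_dist G T g h = real (word_length G T (inv\<^bsub>G\<^esub> g \<otimes>\<^bsub>G\<^esub> h))"

definition stabilizer_pt :: "('g, 'b) monoid_scheme \<Rightarrow> ('g \<Rightarrow> 'x \<Rightarrow> 'x) \<Rightarrow> 'x \<Rightarrow> 'g set" where
  "stabilizer_pt G \<phi> x = {g \<in> carrier G. \<phi> g x = x}"

definition isometric_action :: "('g, 'b) monoid_scheme \<Rightarrow> ('g \<Rightarrow> 'x::metric_space \<Rightarrow> 'x) \<Rightarrow> bool" where
  "isometric_action G \<phi> \<longleftrightarrow> group_action G UNIV \<phi> \<and>
     (\<forall>g\<in>carrier G. \<forall>y z. dist (\<phi> g y) (\<phi> g z) = dist y z)"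

definition proper_rel :: "('g, 'b) monoid_scheme \<Rightarrow> 'g set \<Rightarrow> ('g \<Rightarrow> 'x::metric_space \<Rightarrow> 'x) \<Rightarrow> 'x \<Rightarrow> bool" where
  "proper_rel G S \<phi> x \<longleftrightarrow>
     (\<exists>\<alpha>>0. \<forall>g\<in>carrier G - stabilizer_pt G \<phi> x. dist x (\<phi> g x) > \<alpha>) \<and>
     (\<forall>N::nat. \<exists>R. \<forall>g\<in>{g\<in>carrier G. dist x (\<phi> g x) \<le> real N}.
         cayley_dist G (S \<union> stabilizer_pt G \<phi> x) \<one>\<^bsub>G\<^esub> g \<le> R)"

definition R2_cond :: "('g, 'b) monoid_scheme \<Rightarrow> ('g \<Rightarrow> 'x::metric_space \<Rightarrow> 'x) \<Rightarrow> 'x \<Rightarrow> real \<Rightarrow> nat \<Rightarrow> bool" where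
  "R2_cond G \<phi> x \<delta> k \<longleftrightarrow>
     (\<forall>g\<in>carrier G. \<forall>h\<in>carrier G. \<exists>u\<in>carrier G.
        dist x (\<phi> u x) \<le> gromov_prod dist x (\<phi> g x) (\<phi> h x) + real k * \<delta> \<and>
        dist x (\<phi> (inv\<^bsub>G\<^esub> u \<otimes>\<^bsub>G\<^esub> g) x) \<le>
          gromov_prod dist x (\<phi> (inv\<^bsub>G\<^esub> g) x) (\<phi> (inv\<^bsub>G\<^esub> g \<otimes>\<^bsub>G\<^esub> h) x) + real k * \<delta> \<and>
        dist x (\<phi> (inv\<^bsub>G\<^esub> u \<otimes>\<^bsub>G\<^esub> h) x) \<le>
          gromov_prod dist x (\<phi> (inv\<^bsub>G\<^esub> h) x) (\<phi> (inv\<^bsub>G\<^esub> h \<otimes>\<^bsub>G\<^esub> g) x) + real k * \<delta>)"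

end

theory Submission
  imports Defs "HOL-Real_Asymp.Real_Asymp"
begin

text \<open>
  Let \<open>T = S \<union> G\<^sub>x\<close> and let \<open>d\<^sub>T\<close> be the word metric of the Cayley graph
  \<open>\<Gamma>(G, T)\<close>.  We show that geodesic triangles of \<open>\<Gamma>(G, T)\<close> are uniformly slim; by Rips'
  criterion the Cayley graph is then hyperbolic.

  (1) Hyperbolic geometry of \<open>X\<close>: basic Gromov product estimates and a discrete Morse lemma
      saying that quasi-geodesics stay uniformly close to geodesics and conversely.
  (2) Cayley graphs: the word metric is a left-invariant metric in which any two elements are
      joined by a discrete geodesic, and slim triangles imply the four-point condition.
  (3) The orbit map \<open>g \<mapsto> g x\<close> is Lipschitz (as \<open>S\<close> is finite and \<open>G\<^sub>x\<close> fixes \<open>x\<close>), and by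
      condition (R2) together with relative properness the word metric is bounded by an affine
      function of distances in \<open>X\<close>.  Hence Cayley geodesics map to uniform quasi-geodesics, and
      slimness of triangles in \<open>X\<close> pulls back to \<open>\<Gamma>(G, T)\<close> through properness.
\<close>

section \<open>Gromov products and hyperbolic geodesic spaces\<close>

abbreviation gprod :: "'x::metric_space \<Rightarrow> 'x \<Rightarrow> 'x \<Rightarrow> real" where
  "gprod w y z \<equiv> gromov_prod dist w y z"

lemma gprod_sym: "gprod w y z = gprod w z y"
  unfolding gromov_prod_def by (simp add: dist_commute)

lemma gprod_nonneg: "0 \<le> gprod w y z"
  unfolding gromov_prod_def by metric

lemma gprod_le_dist: "gprod w y z \<le> dist w y"
  unfolding gromov_prod_def by metric

lemma gprod_ge_left: "dist w y - dist y z \<le> gprod w y z"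
  unfolding gromov_prod_def by metric

lemma gprod_ge_right: "dist w z - dist y z \<le> gprod w y z"
  unfolding gromov_prod_def by metric

lemma gprod_base_lipschitz: "gprod w y z \<le> gprod v y z + dist w v"
  unfolding gromov_prod_def by metric

lemma gprod_arg_lipschitz: "gprod w y z \<le> gprod w y z' + dist z z'"
  unfolding gromov_prod_def by metric

lemma gprod_on_segment: "dist y w + dist w z = dist y z \<Longrightarrow> gprod w y z = 0"
  unfolding gromov_prod_def by (simp add: dist_commute)

lemma hyperbolic_four_point:
  assumes "gromov_hyperbolic_on (UNIV::'x::metric_space set) dist \<delta>"
  shows "min (gprod w y u) (gprod w u z) - \<delta> \<le> gprod w y (z::'x)"
  using assms unfolding gromov_hyperbolic_on_def by blast

lemma geodesic_point:
  assumes "geodesic_space TYPE('x::metric_space)" "0 \<le> t" "t \<le> dist y z"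
  shows "\<exists>p::'x. dist y p = t \<and> dist p z = dist y z - t"
proof -
  obtain \<gamma> :: "real \<Rightarrow> 'x" where \<gamma>: "\<gamma> 0 = y" "\<gamma> (dist y z) = z"
    "\<forall>s\<in>{0..dist y z}. \<forall>u\<in>{0..dist y z}. dist (\<gamma> s) (\<gamma> u) = \<bar>s - u\<bar>"
    using assms(1) unfolding geodesic_space_def by blast
  have "dist y (\<gamma> t) = t" using \<gamma>(3)[rule_format, of 0 t] assms \<gamma>(1) by auto
  moreover have "dist (\<gamma> t) z = dist y z - t" using \<gamma>(3)[rule_format, of t "dist y z"] assms \<gamma>(2) by auto
  ultimately show ?thesis by blast
qed

lemma geodesic_discretization:
  assumes "geodesic_space TYPE('x::metric_space)"
  shows "\<exists>K (w::nat \<Rightarrow> 'x). w 0 = a \<and> w K = b \<and>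
           (\<forall>k\<le>K. dist a (w k) + dist (w k) b = dist a b) \<and> (\<forall>k<K. dist (w k) (w (Suc k)) \<le> 1)"
proof -
  define l where "l = dist a b"
  obtain \<gamma> :: "real \<Rightarrow> 'x" where \<gamma>: "\<gamma> 0 = a" "\<gamma> l = b"
    "\<forall>s\<in>{0..l}. \<forall>u\<in>{0..l}. dist (\<gamma> s) (\<gamma> u) = \<bar>s - u\<bar>"
    using assms unfolding geodesic_space_def l_def by blast
  define K :: nat where "K = nat \<lceil>l\<rceil> + 1"
  have K0: "0 < K" and Kl: "l \<le> real K" unfolding K_def by linarith+
  have l0: "0 \<le> l" unfolding l_def by simp
  define w where "w k = \<gamma> (real k * l / real K)" for k
  have tin: "real k * l / real K \<in> {0..l}" if "k \<le> K" for k
  proof -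
    have "real k * l \<le> real K * l" using that l0 by (simp add: mult_right_mono)
    then show ?thesis using K0 l0 by (simp add: divide_le_eq mult.commute)
  qed
  have "dist a (w k) + dist (w k) b = dist a b" if "k \<le> K" for k
    using \<gamma>(3)[rule_format, of 0 "real k * l / real K"] \<gamma>(3)[rule_format, of "real k * l / real K" l]
      tin[OF that] l0 \<gamma>(1,2) unfolding w_def l_def by auto
  moreover have "dist (w k) (w (Suc k)) \<le> 1" if "k < K" for k
  proof -
    have "dist (w k) (w (Suc k)) = \<bar>real k * l / real K - real (Suc k) * l / real K\<bar>"
      unfolding w_def using \<gamma>(3) tin[of k] tin[of "Suc k"] that by simp
    also have "\<dots> = l / real K" using l0 K0 by (simp add: field_simps)
    also have "\<dots> \<le> 1" using Kl K0 by (simp add: divide_le_eq)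
    finally show ?thesis .
  qed
  moreover have "w 0 = a" "w K = b" unfolding w_def using K0 \<gamma>(1,2) by simp_all
  ultimately show ?thesis by blast
qed

text \<open>It is proved by halving the chain.\<close>

lemma hyperbolic_chain:
  assumes hyp: "gromov_hyperbolic_on (UNIV::'x::metric_space set) dist \<delta>" and \<delta>0: "0 \<le> \<delta>"
  shows "0 < m \<Longrightarrow> m \<le> 2^N \<Longrightarrow> (\<forall>i<m. M \<le> gprod w (p i) (p (Suc i))) \<Longrightarrow>
     M - real N * \<delta> \<le> gprod w (p 0) (p m :: 'x)"
proof (induction N arbitrary: p m)
  case 0
  then show ?case by (auto simp: le_Suc_eq)
next
  case (Suc N)
  show ?case
  proof (cases "m \<le> 2^N")
    case True
    then have "M - real N * \<delta> \<le> gprod w (p 0) (p m)" using Suc by blast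
    moreover have "real N * \<delta> \<le> real (Suc N) * \<delta>" using \<delta>0 by (simp add: mult_right_mono)
    ultimately show ?thesis by linarith
  next
    case False
    define h :: nat where "h = 2^N"
    have h: "0 < h" "h < m" "m - h \<le> 2^N" using False Suc.prems(2) by (auto simp: h_def)
    have "M - real N * \<delta> \<le> gprod w (p 0) (p h)"
      using Suc.IH[of h p] h Suc.prems(3) by (simp add: h_def)
    moreover have "M - real N * \<delta> \<le> gprod w (p (h + 0)) (p (h + (m - h)))"
      using Suc.IH[of "m - h" "\<lambda>i. p (h + i)"] h Suc.prems(3) by auto
    moreover have "min (gprod w (p 0) (p h)) (gprod w (p h) (p m)) - \<delta> \<le> gprod w (p 0) (p m)"
      by (rule hyperbolic_four_point[OF hyp])
    ultimately show ?thesis using h by (simp add: algebra_simps)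
  qed
qed

lemma hyperbolic_projection:
  assumes hyp: "gromov_hyperbolic_on (UNIV::'x::metric_space set) dist \<delta>"
    and geo: "geodesic_space TYPE('x)"
  shows "\<exists>p'. dist (a::'x) p' + dist p' z = dist a z \<and> dist p p' \<le> gprod p a z + 2*\<delta>"
proof -
  define t where "t = gprod a p (z::'x)"
  have "0 \<le> t" "t \<le> dist a z"
    unfolding t_def using gprod_nonneg gprod_le_dist[of a z p] gprod_sym[of a p z] by simp_all
  then obtain p' where p': "dist a p' = t" "dist p' z = dist a z - t"
    using geodesic_point[OF geo] by blast
  have "min (gprod a p z) (gprod a z p') - \<delta> \<le> gprod a p p'" by (rule hyperbolic_four_point[OF hyp])
  moreover have "gprod a z p' = t" unfolding gromov_prod_def using p' by (simp add: dist_commute)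
  ultimately have "t - \<delta> \<le> gprod a p p'" unfolding t_def by simp
  then have "dist p p' \<le> dist p a - t + 2*\<delta>"
    using p'(1) dist_commute[of p' a] unfolding gromov_prod_def by (simp add: field_simps)
  moreover have "gprod p a z = dist p a - t" unfolding t_def gromov_prod_def
    using dist_commute[of p a] dist_commute[of z a] dist_commute[of z p] by (simp add: field_simps)
  ultimately have "dist p p' \<le> gprod p a z + 2*\<delta>" by linarith
  then show ?thesis using p' by (intro exI[of _ p']) simp
qed

lemma exists_pow2_between:
  assumes "0 < (m::nat)" shows "\<exists>N. m \<le> 2^N \<and> 2^N \<le> 2*m"
proof -
  define N where "N = (LEAST N. m \<le> 2^N)"
  have "m \<le> 2^N" unfolding N_def by (rule LeastI[of _ m]) (simp add: less_imp_le)
  moreover have "2^N \<le> 2*m"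
  proof (cases N)
    case (Suc N')
    then have "\<not> m \<le> 2^N'" unfolding N_def by (metis lessI not_less_Least)
    then show ?thesis using Suc by simp
  qed (use assms in simp)
  ultimately show ?thesis by blast
qed

lemma exp_dominates_linear: "\<exists>N0::nat. \<forall>N::nat. 2^N \<le> P * real N + Q \<longrightarrow> N \<le> N0"
proof -
  have "eventually (\<lambda>N::nat. P * real N + Q < 2 ^ N) sequentially" by real_asymp
  then obtain N0 where "\<forall>N\<ge>N0. P * real N + Q < 2 ^ N" unfolding eventually_sequentially by blast
  then show ?thesis by (metis not_le nle_le)
qed

lemma discrete_crossing:
  fixes b :: "nat \<Rightarrow> real"
  assumes "b 0 < \<theta>" "\<theta> \<le> b m" "\<forall>i<m. b (Suc i) \<le> b i + c"
  shows "\<exists>i\<le>m. \<theta> \<le> b i \<and> b i < \<theta> + c"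
proof -
  define i0 where "i0 = (LEAST i. \<theta> \<le> b i)"
  have "\<theta> \<le> b i0" "i0 \<le> m" unfolding i0_def using assms(2) by (auto intro: LeastI Least_le)
  moreover obtain i1 where i1: "i0 = Suc i1" using \<open>\<theta> \<le> b i0\<close> assms(1) by (cases i0) auto
  then have "b i1 < \<theta>" unfolding i0_def by (metis lessI not_le not_less_Least)
  moreover have "b i0 \<le> b i1 + c" using assms(3) i1 \<open>i0 \<le> m\<close> by auto
  ultimately show ?thesis by (intro exI[of _ i0]) auto
qed

section \<open>Quasi-geodesics and the Morse lemma\<close>

definition quasi_geodesic :: "(nat \<Rightarrow> 'x::metric_space) \<Rightarrow> nat \<Rightarrow> real \<Rightarrow> real \<Rightarrow> real \<Rightarrow> bool" where
  "quasi_geodesic q n L A B \<longleftrightarrow> (\<forall>i\<le>n. \<forall>j\<le>n. dist (q i) (q j) \<le> L * \<bar>real i - real j\<bar> \<and>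
      \<bar>real i - real j\<bar> \<le> A * dist (q i) (q j) + B)"

lemma quasi_geodesic_upper:
  "quasi_geodesic q n L A B \<Longrightarrow> i \<le> n \<Longrightarrow> j \<le> n \<Longrightarrow> dist (q i) (q j) \<le> L * \<bar>real i - real j\<bar>"
  unfolding quasi_geodesic_def by blast

lemma quasi_geodesic_lower:
  "quasi_geodesic q n L A B \<Longrightarrow> i \<le> n \<Longrightarrow> j \<le> n \<Longrightarrow> \<bar>real i - real j\<bar> \<le> A * dist (q i) (q j) + B"
  unfolding quasi_geodesic_def by blast

lemma detour_gromov_bound:
  assumes hyp: "gromov_hyperbolic_on (UNIV::'x::metric_space set) dist \<delta>" and \<delta>0: "0 \<le> \<delta>"
    and qg: "quasi_geodesic q n L A B" and L0: "0 \<le> L"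
    and s: "s1 \<le> s2" "s2 \<le> n"
    and y: "D - 1 \<le> dist w y' - dist y' (q s1)"
    and z: "D - 1 \<le> dist w z' - dist z' (q s2)"
    and far: "\<forall>i\<le>n. D \<le> dist w (q i)"
  shows "\<exists>N. real (2^N) \<le> 2*(real (s2 - s1) + 2) \<and> D - 1 - L - real N * \<delta> \<le> gprod w y' (z'::'x)"
proof -
  define m where "m = s2 - s1 + 2"
  define p where "p j = (if j = 0 then y' else if j \<le> s2 - s1 + 1 then q (s1 + j - 1) else z')" for j
  have p0: "p 0 = y'" and pm: "p m = z'" unfolding p_def m_def by auto
  have steps: "D - 1 - L \<le> gprod w (p i) (p (Suc i))" if i: "i < m" for i
  proof -
    consider "i = 0" | "0 < i" "i \<le> s2 - s1" | "i = s2 - s1 + 1" using i unfolding m_def by linarith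
    then show ?thesis
    proof cases
      case 1
      then have "p i = y'" "p (Suc i) = q s1" unfolding p_def by auto
      then show ?thesis using gprod_ge_left[of w y' "q s1"] y L0 by simp
    next
      case 2
      then have e: "p i = q (s1 + i - 1)" "p (Suc i) = q (s1 + i)" unfolding p_def by auto
      have "dist (q (s1 + i - 1)) (q (s1 + i)) \<le> L * \<bar>real (s1 + i - 1) - real (s1 + i)\<bar>"
        using quasi_geodesic_upper[OF qg, of "s1 + i - 1" "s1 + i"] 2 s by auto
      also have "\<dots> = L" using 2 by simp
      finally have "dist (q (s1 + i - 1)) (q (s1 + i)) \<le> L" .
      moreover have "D \<le> dist w (q (s1 + i - 1))" using far 2 s by auto
      ultimately show ?thesis using e gprod_ge_left[of w "q (s1 + i - 1)" "q (s1 + i)"] by simp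
    next
      case 3
      then have e: "p i = q s2" "p (Suc i) = z'" unfolding p_def using s by auto
      then show ?thesis using gprod_ge_right[of w z' "q s2"] dist_commute[of z' "q s2"] z L0 by simp
    qed
  qed
  obtain N where N: "m \<le> 2^N" "2^N \<le> 2*m" using exists_pow2_between[of m] unfolding m_def by auto
  have "D - 1 - L - real N * \<delta> \<le> gprod w (p 0) (p m)"
    by (rule hyperbolic_chain[OF hyp \<delta>0 _ N(1)]) (use steps in \<open>simp_all add: m_def\<close>)
  moreover have "real (2^N) \<le> 2*(real (s2 - s1) + 2)"
  proof -
    have "real (2^N) \<le> real (2*m)" using N(2) by (simp only: of_nat_le_iff)
    then show ?thesis unfolding m_def using s by simp
  qed
  ultimately show ?thesis using p0 pm by auto
qed

lemma segment_shadow: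
  fixes q :: "nat \<Rightarrow> 'x::metric_space"
  assumes geo: "geodesic_space TYPE('x)"
    and ws: "dist a w + dist w b = dist a b"
    and near: "\<forall>v. dist a v + dist v b = dist a b \<longrightarrow> (\<exists>i\<le>n. dist v (q i) < D + 1)"
    and far: "\<forall>i\<le>n. D \<le> dist w (q i)" and D0: "0 \<le> D"
    and a: "a = q s0" "s0 \<le> n"
  shows "\<exists>y' s. s \<le> n \<and> dist a y' + dist y' w = dist a w \<and>
           D - 1 \<le> dist w y' - dist y' (q s) \<and> dist y' (q s) \<le> D + 1 \<and> dist y' w \<le> 2*D"
proof (cases "dist a w \<le> 2*D")
  case True
  then show ?thesis using far a D0 by (intro exI[of _ a] exI[of _ s0]) (auto simp: dist_commute)
next
  case False
  obtain p where p: "dist a p = dist a w - 2*D" "dist p w = 2*D"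
    using geodesic_point[OF geo, of "dist a w - 2*D" a w] False D0 by auto
  have "dist a p + dist p b = dist a b"
    using p ws dist_triangle[of p b w] dist_triangle[of a b p] by linarith
  then obtain s where "s \<le> n" "dist p (q s) < D + 1" using near by blast
  then show ?thesis using p by (intro exI[of _ p] exI[of _ s]) (auto simp: dist_commute)
qed

text \<open>The two shadows \<open>y', z'\<close> of \<open>w\<close> lie on the geodesic on either side of \<open>w\<close>, so
  \<open>(y'\<cdot>z')\<^sub>w = 0\<close>, while the detour through \<open>q\<close> between them forces this Gromov product to be at
  least \<open>D - 1 - L - N\<delta>\<close> with \<open>2^N\<close> linear in \<open>D\<close>; hence \<open>N\<close>, and then \<open>D\<close>, are bounded.\<close>

lemma far_point_bound:
  fixes q :: "nat \<Rightarrow> 'x::metric_space"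
  assumes hyp: "gromov_hyperbolic_on (UNIV::'x set) dist \<delta>" and \<delta>0: "0 \<le> \<delta>"
    and geo: "geodesic_space TYPE('x)" and L0: "0 \<le> L" and A0: "0 \<le> A"
    and N0: "\<forall>N::nat. 2^N \<le> (12*A*\<delta>) * real N + (2*A*(8+6*L)+2*B+4) \<longrightarrow> N \<le> N0"
    and qg: "quasi_geodesic q n L A B"
    and ws: "dist (q 0) w + dist w (q n) = dist (q 0) (q n)"
    and far: "\<forall>i\<le>n. D \<le> dist w (q i)" and D0: "0 \<le> D"
    and near: "\<forall>v. dist (q 0) v + dist v (q n) = dist (q 0) (q n) \<longrightarrow> (\<exists>i\<le>n. dist v (q i) < D + 1)"
  shows "D \<le> 1 + L + real N0 * \<delta>"
proof -
  obtain y' s1 where y': "s1 \<le> n" "dist (q 0) y' + dist y' w = dist (q 0) w"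
      "D - 1 \<le> dist w y' - dist y' (q s1)" "dist y' (q s1) \<le> D + 1" "dist y' w \<le> 2*D"
    using segment_shadow[OF geo ws near far D0, of 0] by auto
  have ws': "dist (q n) w + dist w (q 0) = dist (q n) (q 0)"
    using ws by (simp add: dist_commute add.commute)
  have near': "\<forall>v. dist (q n) v + dist v (q 0) = dist (q n) (q 0) \<longrightarrow> (\<exists>i\<le>n. dist v (q i) < D + 1)"
    using near by (simp add: dist_commute add.commute)
  obtain z' s2 where z': "s2 \<le> n" "dist (q n) z' + dist z' w = dist (q n) w"
      "D - 1 \<le> dist w z' - dist z' (q s2)" "dist z' (q s2) \<le> D + 1" "dist z' w \<le> 2*D"
    using segment_shadow[OF geo ws' near' far D0, of n] by auto
  have "dist y' w + dist w z' = dist y' z'"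
    using y'(2) z'(2) ws dist_triangle[of y' z' w] dist_triangle[of "q 0" "q n" y']
      dist_triangle[of y' "q n" z'] dist_commute[of w "q n"] dist_commute[of z' w] dist_commute[of "q n" z']
    by linarith
  then have gp0: "gprod w y' z' = 0" by (rule gprod_on_segment)
  obtain N where N: "real (2^N) \<le> 2*(\<bar>real s1 - real s2\<bar> + 2)" "D - 1 - L - real N * \<delta> \<le> 0"
  proof (cases "s1 \<le> s2")
    case True
    then show ?thesis
      using detour_gromov_bound[OF hyp \<delta>0 qg L0 True z'(1) y'(3) z'(3) far] gp0 that
      by (auto simp: of_nat_diff)
  next
    case False
    then show ?thesis
      using detour_gromov_bound[OF hyp \<delta>0 qg L0 _ y'(1) z'(3) y'(3) far] gp0 gprod_sym[of w y' z'] that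
      by (auto simp: of_nat_diff)
  qed
  have "dist (q s1) (q s2) \<le> 6*D + 2"
    using y'(4,5) z'(4,5) dist_triangle[of "q s1" "q s2" y'] dist_triangle[of y' "q s2" w]
      dist_triangle[of w "q s2" z'] dist_commute[of y' "q s1"] dist_commute[of y' w]
      dist_commute[of z' w] by linarith
  then have "\<bar>real s1 - real s2\<bar> \<le> A*(6*D+2) + B"
    using quasi_geodesic_lower[OF qg y'(1) z'(1)] mult_left_mono[OF _ A0] by fastforce
  moreover have "A * D \<le> A * (1 + L + real N * \<delta>)" using N(2) A0 by (intro mult_left_mono) auto
  ultimately have "2^N \<le> (12*A*\<delta>) * real N + (2*A*(8+6*L)+2*B+4)"
    using N(1) by (simp add: algebra_simps)
  then have "real N * \<delta> \<le> real N0 * \<delta>" using N0 \<delta>0 by (simp add: mult_right_mono)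
  then show ?thesis using N(2) by linarith
qed

text \<open>We apply \<open>far_point_bound\<close> to a
  point \<open>w\<^sub>0\<close> of the segment whose distance to \<open>q\<close> is within \<open>1\<close> of the supremum.\<close>

lemma geodesic_near_quasi_geodesic:
  assumes hyp: "gromov_hyperbolic_on (UNIV::'x::metric_space set) dist \<delta>" and \<delta>0: "0 \<le> \<delta>"
    and geo: "geodesic_space TYPE('x)" and L0: "0 \<le> L" and A0: "0 \<le> A"
  shows "\<exists>M. \<forall>n (q::nat \<Rightarrow> 'x). quasi_geodesic q n L A B \<longrightarrow>
    (\<forall>w. dist (q 0) w + dist w (q n) = dist (q 0) (q n) \<longrightarrow> (\<exists>i\<le>n. dist w (q i) \<le> M))"
proof -
  obtain N0 where N0: "\<forall>N::nat. 2^N \<le> (12*A*\<delta>) * real N + (2*A*(8+6*L)+2*B+4) \<longrightarrow> N \<le> N0"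
    using exp_dominates_linear by blast
  define M0 where "M0 = 1 + L + real N0 * \<delta>"
  show ?thesis
  proof (intro exI[of _ "M0 + 1"] allI impI)
    fix n and q :: "nat \<Rightarrow> 'x" and w
    assume qg: "quasi_geodesic q n L A B" and ws: "dist (q 0) w + dist w (q n) = dist (q 0) (q n)"
    define \<rho> where "\<rho> v = Min ((\<lambda>i. dist v (q i)) ` {..n})" for v
    define W where "W = {v. dist (q 0) v + dist v (q n) = dist (q 0) (q n)}"
    have \<rho>_attained: "\<exists>i\<le>n. dist v (q i) = \<rho> v" for v
    proof -
      have "\<rho> v \<in> (\<lambda>i. dist v (q i)) ` {..n}" unfolding \<rho>_def by (rule Min_in) auto
      then show ?thesis by auto
    qed
    have \<rho>_le: "\<rho> v \<le> dist v (q i)" if "i \<le> n" for v i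
      unfolding \<rho>_def using that by auto
    have bdd: "bdd_above (\<rho> ` W)"
    proof (rule bdd_aboveI2)
      fix v assume "v \<in> W"
      then have "dist (q 0) v + dist v (q n) = dist (q 0) (q n)" unfolding W_def by simp
      then have "dist v (q 0) \<le> dist (q 0) (q n)"
        using zero_le_dist[of v "q n"] dist_commute[of v "q 0"] by linarith
      then show "\<rho> v \<le> dist (q 0) (q n)" using \<rho>_le[of 0 v] by linarith
    qed
    have "q 0 \<in> W" unfolding W_def by simp
    then have upper: "\<rho> v \<le> Sup (\<rho> ` W)" if "v \<in> W" for v
      using bdd that by (simp add: cSup_upper)
    obtain w0 where w0: "w0 \<in> W" "Sup (\<rho> ` W) - 1 < \<rho> w0"
      using less_cSup_iff[OF _ bdd, of "Sup (\<rho> ` W) - 1"] \<open>q 0 \<in> W\<close> by auto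
    have "\<rho> w0 \<le> M0" unfolding M0_def
    proof (rule far_point_bound[OF hyp \<delta>0 geo L0 A0 N0 qg])
      show "dist (q 0) w0 + dist w0 (q n) = dist (q 0) (q n)" using w0 unfolding W_def by simp
      show "\<forall>i\<le>n. \<rho> w0 \<le> dist w0 (q i)" using \<rho>_le by blast
      show "0 \<le> \<rho> w0" using \<rho>_attained[of w0] zero_le_dist by metis
      show "\<forall>v. dist (q 0) v + dist v (q n) = dist (q 0) (q n) \<longrightarrow> (\<exists>i\<le>n. dist v (q i) < \<rho> w0 + 1)"
      proof (intro allI impI)
        fix v assume "dist (q 0) v + dist v (q n) = dist (q 0) (q n)"
        then have "\<rho> v < \<rho> w0 + 1" using upper[of v] w0(2) unfolding W_def by simp
        then show "\<exists>i\<le>n. dist v (q i) < \<rho> w0 + 1" using \<rho>_attained[of v] by auto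
      qed
    qed
    moreover have "w \<in> W" using ws unfolding W_def by simp
    ultimately have "\<rho> w \<le> M0 + 1" using upper w0 by fastforce
    then show "\<exists>i\<le>n. dist w (q i) \<le> M0 + 1" using \<rho>_attained[of w] by auto
  qed
qed

text \<open>Consequently, any point whose Gromov product with respect to the ends of a quasi-geodesic is
  bounded lies uniformly close to the quasi-geodesic (project it to the geodesic first).\<close>

lemma small_gprod_near_quasi_geodesic:
  assumes hyp: "gromov_hyperbolic_on (UNIV::'x::metric_space set) dist \<delta>" and \<delta>0: "0 \<le> \<delta>"
    and geo: "geodesic_space TYPE('x)" and L0: "0 \<le> L" and A0: "0 \<le> A"
  shows "\<exists>M. \<forall>n (q::nat \<Rightarrow> 'x). quasi_geodesic q n L A B \<longrightarrow>
    (\<forall>w. gprod w (q 0) (q n) \<le> c \<longrightarrow> (\<exists>i\<le>n. dist w (q i) \<le> M))"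
proof -
  obtain M1 where M1: "\<forall>n (q::nat \<Rightarrow> 'x). quasi_geodesic q n L A B \<longrightarrow>
    (\<forall>w. dist (q 0) w + dist w (q n) = dist (q 0) (q n) \<longrightarrow> (\<exists>i\<le>n. dist w (q i) \<le> M1))"
    using geodesic_near_quasi_geodesic[OF hyp \<delta>0 geo L0 A0] by blast
  show ?thesis
  proof (intro exI[of _ "M1 + c + 2*\<delta>"] allI impI)
    fix n and q :: "nat \<Rightarrow> 'x" and w
    assume qg: "quasi_geodesic q n L A B" and c: "gprod w (q 0) (q n) \<le> c"
    obtain p' where p': "dist (q 0) p' + dist p' (q n) = dist (q 0) (q n)"
        "dist w p' \<le> gprod w (q 0) (q n) + 2*\<delta>"
      using hyperbolic_projection[OF hyp geo, of "q 0" "q n" w] by blast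
    obtain i where "i \<le> n" "dist p' (q i) \<le> M1" using M1 qg p'(1) by blast
    then show "\<exists>i\<le>n. dist w (q i) \<le> M1 + c + 2*\<delta>"
      using p'(2) c dist_triangle[of w "q i" p'] by (intro exI[of _ i]) auto
  qed
qed

lemma sandwiched_gprod_bound:
  fixes q :: "nat \<Rightarrow> 'x::metric_space"
  assumes qg: "quasi_geodesic q n L A B" and L0: "0 \<le> L" and A0: "0 \<le> A"
    and j: "j1 \<le> i" "i \<le> j2" "j2 \<le> n" and close: "dist (q j1) (q j2) \<le> R"
    and v: "dist (q 0) v + dist v (q n) = dist (q 0) (q n)" "dist v (q j1) \<le> M"
  shows "gprod (q i) (q 0) (q n) \<le> M + L * (A * R + B)"
proof -
  have "\<bar>real j1 - real j2\<bar> \<le> A * dist (q j1) (q j2) + B"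
    using quasi_geodesic_lower[OF qg, of j1 j2] j by simp
  also have "\<dots> \<le> A * R + B" using close A0 by (simp add: mult_left_mono)
  finally have "real i - real j1 \<le> A * R + B" using j by linarith
  then have "L * \<bar>real i - real j1\<bar> \<le> L * (A * R + B)" using j L0 by (simp add: mult_left_mono)
  then have "dist (q i) (q j1) \<le> L * (A * R + B)"
    using quasi_geodesic_upper[OF qg, of i j1] j by linarith
  moreover have "gprod v (q 0) (q n) = 0" using v(1) by (rule gprod_on_segment)
  ultimately show ?thesis
    using gprod_base_lipschitz[of "q i" "q 0" "q n" v] dist_triangle[of "q i" v "q j1"] v(2)
    by (simp add: dist_commute)
qed

text \<open>Walk along a discretization \<open>w\<^sub>0, \<dots>, w\<^sub>K\<close> of the geodesic and stop at the
  first \<open>w\<^sub>k\<close> that is close to some \<open>q j\<close> with \<open>j \<ge> i\<close>; the previous \<open>w\<^sub>k\<close> is close to some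
  \<open>q j\<close> with \<open>j < i\<close>, which sandwiches \<open>q i\<close>.\<close>

lemma quasi_geodesic_near_geodesic:
  assumes hyp: "gromov_hyperbolic_on (UNIV::'x::metric_space set) dist \<delta>" and \<delta>0: "0 \<le> \<delta>"
    and geo: "geodesic_space TYPE('x)" and L0: "0 \<le> L" and A0: "0 \<le> A"
  shows "\<exists>H. \<forall>n (q::nat \<Rightarrow> 'x). quasi_geodesic q n L A B \<longrightarrow> (\<forall>i\<le>n. gprod (q i) (q 0) (q n) \<le> H)"
proof -
  obtain M' where M': "\<forall>n (q::nat \<Rightarrow> 'x). quasi_geodesic q n L A B \<longrightarrow>
    (\<forall>w. dist (q 0) w + dist w (q n) = dist (q 0) (q n) \<longrightarrow> (\<exists>i\<le>n. dist w (q i) \<le> M'))"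
    using geodesic_near_quasi_geodesic[OF hyp \<delta>0 geo L0 A0] by blast
  define M where "M = max M' 0"
  have M0: "0 \<le> M" unfolding M_def by simp
  have "gprod (q i) (q 0) (q n) \<le> M + L * (A * (2*M+1) + B)"
    if qg: "quasi_geodesic q n L A B" and i: "i \<le> n" for n and q :: "nat \<Rightarrow> 'x" and i
  proof -
    obtain K w where w: "w 0 = q 0" "w K = q n"
        "\<forall>k\<le>K. dist (q 0) (w k) + dist (w k) (q n) = dist (q 0) (q n)"
        "\<forall>k<K. dist (w k) (w (Suc k)) \<le> 1"
      using geodesic_discretization[OF geo, of "q 0" "q n"] by blast
    have near: "\<exists>j\<le>n. dist (w k) (q j) \<le> M" if "k \<le> K" for k
      using M' qg w(3) that unfolding M_def by (meson max.coboundedI1)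
    define P where "P k \<longleftrightarrow> (\<exists>j. i \<le> j \<and> j \<le> n \<and> dist (w k) (q j) \<le> M)" for k
    have "P K" unfolding P_def using w(2) i M0 by (intro exI[of _ n]) auto
    define k0 where "k0 = (LEAST k. P k)"
    have "P k0" "k0 \<le> K" unfolding k0_def using \<open>P K\<close> by (auto intro: LeastI Least_le)
    then obtain j2 where j2: "i \<le> j2" "j2 \<le> n" "dist (w k0) (q j2) \<le> M" unfolding P_def by blast
    show ?thesis
    proof (cases k0)
      case 0
      then have "dist (q 0) (q j2) \<le> 2*M+1" using j2(3) w(1) M0 by simp
      then show ?thesis
        using sandwiched_gprod_bound[OF qg L0 A0 _ j2(1,2), of 0 "2*M+1" "q 0" M] M0 by simp
    next
      case (Suc k1)
      then have "\<not> P k1" unfolding k0_def by (metis lessI not_less_Least)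
      obtain j1 where j1: "j1 \<le> n" "dist (w k1) (q j1) \<le> M" using near[of k1] Suc \<open>k0 \<le> K\<close> by auto
      have "j1 \<le> i" using \<open>\<not> P k1\<close> j1 unfolding P_def by (meson nle_le)
      have "dist (q j1) (q j2) \<le> dist (q j1) (w k1) + dist (w k1) (w k0) + dist (w k0) (q j2)"
        by (metis dist_triangle order_trans add_right_mono)
      moreover have "dist (w k1) (w k0) \<le> 1" using w(4) Suc \<open>k0 \<le> K\<close> by simp
      ultimately have "dist (q j1) (q j2) \<le> 2*M + 1" using j1(2) j2(3) by (simp add: dist_commute)
      moreover have "dist (q 0) (w k1) + dist (w k1) (q n) = dist (q 0) (q n)"
        using w(3) Suc \<open>k0 \<le> K\<close> by simp
      ultimately show ?thesis
        using sandwiched_gprod_bound[OF qg L0 A0 \<open>j1 \<le> i\<close> j2(1,2)] j1(2) by blast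
    qed
  qed
  then show ?thesis by blast
qed

section \<open>Cayley graphs and their hyperbolicity\<close>

locale cayley_graph = group G for G :: "('g, 'b) monoid_scheme" (structure) +
  fixes T :: "'g set"
  assumes gens_closed: "T \<subseteq> carrier G" and generates: "generate G T = carrier G"
begin

abbreviation letters :: "'g set" where "letters \<equiv> T \<union> ((\<lambda>s. inv s) ` T)"
abbreviation wl :: "'g \<Rightarrow> nat" where "wl \<equiv> word_length G T"
abbreviation dC :: "'g \<Rightarrow> 'g \<Rightarrow> real" where "dC \<equiv> cayley_dist G T"

definition word_prod :: "'g list \<Rightarrow> 'g" where "word_prod ws = foldr (\<lambda>a b. a \<otimes> b) ws \<one>"

lemma letters_closed: "letters \<subseteq> carrier G"
  using gens_closed by auto

lemma letters_inv: "a \<in> letters \<Longrightarrow> inv a \<in> letters"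
  using gens_closed by auto

lemma word_prod_Nil [simp]: "word_prod [] = \<one>"
  unfolding word_prod_def by simp

lemma word_prod_Cons: "word_prod (a # ws) = a \<otimes> word_prod ws"
  unfolding word_prod_def by simp

lemma word_prod_closed: "set ws \<subseteq> carrier G \<Longrightarrow> word_prod ws \<in> carrier G"
  unfolding word_prod_def by (induction ws) auto

lemma word_prod_append:
  "set ws \<subseteq> carrier G \<Longrightarrow> set vs \<subseteq> carrier G \<Longrightarrow> word_prod (ws @ vs) = word_prod ws \<otimes> word_prod vs"
  by (induction ws) (auto simp: word_prod_Cons m_assoc word_prod_closed)

lemma word_prod_inverse:
  "set ws \<subseteq> carrier G \<Longrightarrow> word_prod (rev (map (\<lambda>a. inv a) ws)) = inv (word_prod ws)"
proof (induction ws)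
  case (Cons a ws)
  have "word_prod (rev (map (\<lambda>a. inv a) (a # ws))) = word_prod (rev (map (\<lambda>a. inv a) ws) @ [inv a])"
    by simp
  also have "\<dots> = word_prod (rev (map (\<lambda>a. inv a) ws)) \<otimes> inv a"
    using Cons.prems by (subst word_prod_append) (auto simp: word_prod_Cons)
  also have "\<dots> = inv (a \<otimes> word_prod ws)"
    using Cons word_prod_closed by (simp add: inv_mult_group)
  finally show ?case by (simp add: word_prod_Cons)
qed simp

lemma word_exists: "g \<in> carrier G \<Longrightarrow> \<exists>ws. set ws \<subseteq> letters \<and> word_prod ws = g"
proof -
  assume "g \<in> carrier G"
  then have "g \<in> generate G T" using generates by simp
  then show ?thesis
  proof (induction rule: generate.induct)
    case one then show ?case by (intro exI[of _ "[]"]) simp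
  next
    case (incl h) then show ?case using gens_closed by (intro exI[of _ "[h]"]) (auto simp: word_prod_Cons)
  next
    case (inv h) then show ?case using gens_closed by (intro exI[of _ "[inv h]"]) (auto simp: word_prod_Cons)
  next
    case (eng h1 h2)
    then obtain ws vs where "set ws \<subseteq> letters" "word_prod ws = h1" "set vs \<subseteq> letters" "word_prod vs = h2"
      by blast
    then show ?case using letters_closed word_prod_append[of ws vs] by (intro exI[of _ "ws @ vs"]) auto
  qed
qed

lemma shortest_word:
  "g \<in> carrier G \<Longrightarrow> \<exists>ws. length ws = wl g \<and> set ws \<subseteq> letters \<and> word_prod ws = g"
proof -
  assume "g \<in> carrier G"
  then obtain ws where ws: "set ws \<subseteq> letters" "word_prod ws = g" using word_exists by blast
  let ?P = "\<lambda>n. \<exists>ws. length ws = n \<and> set ws \<subseteq> letters \<and> foldr (\<lambda>a b. a \<otimes> b) ws \<one> = g"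
  have "?P (length ws)" using ws unfolding word_prod_def by blast
  then have "?P (LEAST n. ?P n)" by (rule LeastI)
  then show ?thesis unfolding word_length_def word_prod_def by blast
qed

lemma word_length_le: "set ws \<subseteq> letters \<Longrightarrow> wl (word_prod ws) \<le> length ws"
  unfolding word_length_def word_prod_def by (rule Least_le) blast

lemma word_length_mult: "g \<in> carrier G \<Longrightarrow> h \<in> carrier G \<Longrightarrow> wl (g \<otimes> h) \<le> wl g + wl h"
proof -
  assume g: "g \<in> carrier G" and h: "h \<in> carrier G"
  obtain ws where ws: "length ws = wl g" "set ws \<subseteq> letters" "word_prod ws = g"
    using shortest_word[OF g] by blast
  obtain vs where vs: "length vs = wl h" "set vs \<subseteq> letters" "word_prod vs = h"
    using shortest_word[OF h] by blast
  have "word_prod (ws @ vs) = g \<otimes> h"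
    using word_prod_append[of ws vs] ws(2,3) vs(2,3) letters_closed by blast
  moreover have "wl (word_prod (ws @ vs)) \<le> length (ws @ vs)"
    using ws(2) vs(2) by (intro word_length_le) simp
  ultimately show ?thesis using ws(1) vs(1) by simp
qed

lemma word_length_inv: "g \<in> carrier G \<Longrightarrow> wl (inv g) \<le> wl g"
proof -
  assume "g \<in> carrier G"
  then obtain ws where ws: "length ws = wl g" "set ws \<subseteq> letters" "word_prod ws = g"
    using shortest_word by blast
  have "set (rev (map (\<lambda>a. inv a) ws)) \<subseteq> letters" using ws(2) letters_inv by auto
  then have "wl (word_prod (rev (map (\<lambda>a. inv a) ws))) \<le> length ws"
    using word_length_le by fastforce
  moreover have "word_prod (rev (map (\<lambda>a. inv a) ws)) = inv g"
    using word_prod_inverse[of ws] ws(2,3) letters_closed by blast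
  ultimately show ?thesis using ws(1) by simp
qed

lemma dC_eq: "dC g h = real (wl (inv g \<otimes> h))"
  unfolding cayley_dist_def by simp

lemma dC_refl: "g \<in> carrier G \<Longrightarrow> dC g g = 0"
  using word_length_le[of "[]"] by (simp add: dC_eq)

lemma dC_sym: "g \<in> carrier G \<Longrightarrow> h \<in> carrier G \<Longrightarrow> dC g h = dC h g"
  using word_length_inv[of "inv g \<otimes> h"] word_length_inv[of "inv h \<otimes> g"]
  by (simp add: dC_eq inv_mult_group)

lemma dC_triangle:
  assumes "g \<in> carrier G" "h \<in> carrier G" "m \<in> carrier G"
  shows "dC g h \<le> dC g m + dC m h"
proof -
  have "inv g \<otimes> h = (inv g \<otimes> m) \<otimes> (inv m \<otimes> h)"
    using assms by (simp add: m_assoc[symmetric]) (simp add: m_assoc r_inv)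
  then show ?thesis using word_length_mult[of "inv g \<otimes> m" "inv m \<otimes> h"] assms by (simp add: dC_eq)
qed

lemma dC_left_invariant:
  "f \<in> carrier G \<Longrightarrow> g \<in> carrier G \<Longrightarrow> h \<in> carrier G \<Longrightarrow> dC (f \<otimes> g) (f \<otimes> h) = dC g h"
  by (simp add: dC_eq inv_mult_group m_assoc) (simp add: m_assoc[symmetric])

definition cayley_geodesic :: "(nat \<Rightarrow> 'g) \<Rightarrow> nat \<Rightarrow> bool" where
  "cayley_geodesic p n \<longleftrightarrow> (\<forall>i. p i \<in> carrier G) \<and> (\<forall>i\<le>n. \<forall>j\<le>n. dC (p i) (p j) = \<bar>real i - real j\<bar>)"

lemma cayley_geodesic_closed: "cayley_geodesic p n \<Longrightarrow> p i \<in> carrier G"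
  unfolding cayley_geodesic_def by blast

lemma cayley_geodesic_dist:
  "cayley_geodesic p n \<Longrightarrow> i \<le> n \<Longrightarrow> j \<le> n \<Longrightarrow> dC (p i) (p j) = \<bar>real i - real j\<bar>"
  unfolding cayley_geodesic_def by blast

lemma word_prefix_dist:
  assumes g: "g \<in> carrier G" and ws: "set ws \<subseteq> letters" and ij: "i \<le> j" "j \<le> length ws"
  shows "dC (g \<otimes> word_prod (take i ws)) (g \<otimes> word_prod (take j ws)) \<le> real j - real i"
proof -
  define r where "r = take (j - i) (drop i ws)"
  have tj: "take j ws = take i ws @ r" unfolding r_def using take_add[of i "j - i" ws] ij by simp
  have c1: "set (take i ws) \<subseteq> carrier G" using ws letters_closed by (meson order_trans set_take_subset)
  have r: "set r \<subseteq> letters" unfolding r_def using ws by (meson order_trans set_take_subset set_drop_subset)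
  then have c2: "set r \<subseteq> carrier G" using letters_closed by blast
  have "dC (g \<otimes> word_prod (take i ws)) (g \<otimes> word_prod (take j ws))
      = dC (word_prod (take i ws) \<otimes> \<one>) (word_prod (take i ws) \<otimes> word_prod r)"
    using g word_prod_closed[OF c1] word_prod_closed[OF c2]
    by (simp add: tj word_prod_append[OF c1 c2] dC_left_invariant)
  also have "\<dots> = dC \<one> (word_prod r)"
    using word_prod_closed[OF c1] word_prod_closed[OF c2] by (intro dC_left_invariant) auto
  also have "\<dots> = real (wl (word_prod r))" using word_prod_closed[OF c2] by (simp add: dC_eq)
  also have "\<dots> \<le> real j - real i" using word_length_le[OF r] ij unfolding r_def by simp
  finally show ?thesis .
qed

text \<open>The Cayley graph is geodesic: the prefixes of a shortest word for \<open>g\<inverse>h\<close> form a geodesic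
  from \<open>g\<close> to \<open>h\<close>; the triangle inequality forces every prefix estimate to be an equality.\<close>

lemma cayley_geodesic_exists:
  assumes g: "g \<in> carrier G" and h: "h \<in> carrier G"
  shows "\<exists>p n. cayley_geodesic p n \<and> p 0 = g \<and> p n = h"
proof -
  define n where "n = wl (inv g \<otimes> h)"
  obtain ws where ws: "length ws = n" "set ws \<subseteq> letters" "word_prod ws = inv g \<otimes> h"
    using shortest_word[of "inv g \<otimes> h"] g h unfolding n_def by auto
  define p where "p i = g \<otimes> word_prod (take i ws)" for i
  have pc: "p i \<in> carrier G" for i
    unfolding p_def using g ws(2) letters_closed
    by (meson m_closed order_trans set_take_subset word_prod_closed)
  have p0: "p 0 = g" and pn: "p n = h" unfolding p_def using ws g h by (simp_all add: m_assoc[symmetric])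
  have upper: "dC (p i) (p j) \<le> real j - real i" if "i \<le> j" "j \<le> n" for i j
    unfolding p_def using word_prefix_dist[OF g ws(2)] that ws(1) by simp
  have eq: "dC (p i) (p j) = real j - real i" if ij: "i \<le> j" "j \<le> n" for i j
  proof -
    have "real n = dC g h" unfolding n_def dC_eq by simp
    also have "\<dots> = dC (p 0) (p n)" using p0 pn by simp
    also have "\<dots> \<le> dC (p 0) (p i) + dC (p i) (p j) + dC (p j) (p n)"
      using dC_triangle[of "p 0" "p n" "p i"] dC_triangle[of "p i" "p n" "p j"] pc by simp
    finally show ?thesis using upper[of 0 i] upper[of j n] upper[OF ij] ij by simp
  qed
  have "dC (p i) (p j) = \<bar>real i - real j\<bar>" if "i \<le> n" "j \<le> n" for i j
    using eq[of i j] eq[of j i] dC_sym[OF pc pc, of i j] that by (cases "i \<le> j") auto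
  then show ?thesis using p0 pn pc unfolding cayley_geodesic_def by blast
qed

abbreviation gprodC :: "'g \<Rightarrow> 'g \<Rightarrow> 'g \<Rightarrow> real" where "gprodC \<equiv> gromov_prod dC"

definition slim_triangles :: "real \<Rightarrow> bool" where
  "slim_triangles K \<longleftrightarrow> (\<forall>Q nq R nr P np.
     cayley_geodesic Q nq \<and> cayley_geodesic R nr \<and> cayley_geodesic P np \<and>
     R 0 = Q 0 \<and> P 0 = Q nq \<and> P np = R nr \<longrightarrow>
     (\<forall>t\<le>nq. (\<exists>i\<le>nr. dC (Q t) (R i) \<le> K) \<or> (\<exists>i\<le>np. dC (Q t) (P i) \<le> K)))"

text \<open>In a slim triangle \<open>a, y, z\<close> the side \<open>[y, z]\<close> passes within \<open>(y\<cdot>z)\<^sub>a + 1 + 2K\<close> of \<open>a\<close>: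
  follow \<open>[a, y]\<close> up to the first point close to \<open>[y, z]\<close>; the point before it is close to
  \<open>[a, z]\<close>, which bounds its distance to \<open>a\<close> by the Gromov product.\<close>

lemma slim_projection:
  assumes slim: "slim_triangles K" and K0: "0 \<le> K"
    and P: "cayley_geodesic P np" and a: "a \<in> carrier G"
  shows "\<exists>i\<le>np. dC a (P i) \<le> gprodC a (P 0) (P np) + (1 + 2*K)"
proof -
  define y where "y = P 0"
  define z where "z = P np"
  have yz: "y \<in> carrier G" "z \<in> carrier G" unfolding y_def z_def using cayley_geodesic_closed[OF P] by auto
  obtain Q nq where Q: "cayley_geodesic Q nq" "Q 0 = a" "Q nq = y" using cayley_geodesic_exists[OF a yz(1)] by blast
  obtain R nr where R: "cayley_geodesic R nr" "R 0 = a" "R nr = z" using cayley_geodesic_exists[OF a yz(2)] by blast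
  have Qc: "Q i \<in> carrier G" "R i \<in> carrier G" "P i \<in> carrier G" for i
    using cayley_geodesic_closed Q(1) R(1) P by auto
  have QdQ: "dC (Q s) (Q t) = \<bar>real s - real t\<bar>" if "s \<le> nq" "t \<le> nq" for s t
    using cayley_geodesic_dist[OF Q(1)] that by blast
  have RdR: "dC (R s) (R t) = \<bar>real s - real t\<bar>" if "s \<le> nr" "t \<le> nr" for s t
    using cayley_geodesic_dist[OF R(1)] that by blast
  define near_P where "near_P t \<longleftrightarrow> (\<exists>i\<le>np. dC (Q t) (P i) \<le> K)" for t
  have "near_P nq" unfolding near_P_def using Q(3) yz K0 dC_refl[of y] by (intro exI[of _ 0]) (auto simp: y_def)
  define t0 where "t0 = (LEAST t. near_P t)"
  have "near_P t0" "t0 \<le> nq" unfolding t0_def using \<open>near_P nq\<close> by (auto intro: LeastI Least_le)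
  then obtain j where j: "j \<le> np" "dC (Q t0) (P j) \<le> K" unfolding near_P_def by blast
  have "dC a (Q t0) = real t0" using QdQ[of 0 t0] Q(2) \<open>t0 \<le> nq\<close> by simp
  then have dap: "dC a (P j) \<le> real t0 + K" using dC_triangle[of a "P j" "Q t0"] a Qc j by simp
  have "real t0 \<le> gprodC a y z + 1 + K"
  proof (cases t0)
    case 0
    have "dC y z \<le> dC y a + dC z a" using dC_triangle[of y z a] dC_sym[of a z] yz a by simp
    then show ?thesis using 0 K0 unfolding gromov_prod_def by simp
  next
    case (Suc t1)
    then have "\<not> near_P t1" unfolding t0_def by (metis lessI not_less_Least)
    then obtain i where i: "i \<le> nr" "dC (Q t1) (R i) \<le> K"
      using slim Q R P Suc \<open>t0 \<le> nq\<close> unfolding slim_triangles_def near_P_def y_def z_def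
      by (metis Suc_leD)
    have "dC y z \<le> dC y (Q t0) + dC (Q t0) (Q t1) + dC (Q t1) (R i) + dC (R i) z"
      using dC_triangle[of y z "Q t0"] dC_triangle[of "Q t0" z "Q t1"] dC_triangle[of "Q t1" z "R i"]
        yz Qc by fastforce
    moreover have "dC y (Q t0) = real nq - real t0" "dC (Q t0) (Q t1) = 1"
      "dC (R i) z = real nr - real i" "dC a (R i) = real i" "dC a (Q t1) = real t1"
      "dC y a = real nq" "dC z a = real nr"
      using QdQ[of nq t0] QdQ[of t0 t1] QdQ[of nq 0] QdQ[of 0 t1] RdR[of i nr] RdR[of 0 i] RdR[of nr 0]
        Q R Suc \<open>t0 \<le> nq\<close> i(1) by auto
    moreover have "dC a (Q t1) \<le> dC a (R i) + dC (Q t1) (R i)"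
      using dC_triangle[of a "Q t1" "R i"] dC_sym[of "R i" "Q t1"] a Qc by simp
    moreover have "2 * gprodC a y z = dC y a + dC z a - dC y z" unfolding gromov_prod_def by simp
    ultimately show ?thesis using Suc i(2) by linarith
  qed
  then show ?thesis using j dap unfolding y_def z_def by (intro exI[of _ j]) auto
qed

lemma gprod_by_projections:
  assumes P: "cayley_geodesic P np" "P 0 = y" "P np = z" and wu: "w \<in> carrier G" "u \<in> carrier G"
    and ij: "i \<le> j" "j \<le> np"
    and wi: "dC w (P i) \<le> gprodC w y z + K" and uj: "dC u (P j) \<le> gprodC u y z + K"
  shows "gprodC w y u \<le> gprodC w y z + 2*K"
proof -
  have Pc: "P i \<in> carrier G" "P j \<in> carrier G" "y \<in> carrier G" "z \<in> carrier G"
    using cayley_geodesic_closed[OF P(1)] P(2,3) by auto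
  have dist: "dC y (P i) = real i" "dC (P j) z = real np - real j" "dC y (P j) = real j"
    "dC y z = real np" "dC (P i) (P j) = real j - real i"
    using cayley_geodesic_dist[OF P(1)] P(2,3) ij by auto
  have "dC y w \<le> dC y (P i) + dC w (P i)" "dC u w \<le> dC u (P j) + dC (P i) (P j) + dC w (P i)"
    "dC y u \<le> dC y (P j) + dC u (P j)"
    using dC_triangle[of y w "P i"] dC_triangle[of u w "P i"] dC_triangle[of u "P i" "P j"]
      dC_triangle[of y u "P j"] dC_sym[of "P i" w] dC_sym[of "P j" u] dC_sym[of "P j" "P i"] Pc wu
    by auto
  moreover have "dC y u \<le> dC y (P j) + dC u (P j)" "dC u z \<le> dC u (P j) + dC (P j) z"
    "dC y w + dC w z \<ge> dC y z"
    using dC_triangle[of y u "P j"] dC_triangle[of u z "P j"] dC_triangle[of y z w]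
      dC_sym[of "P j" u] Pc wu by auto
  ultimately show ?thesis
    using wi uj dist dC_sym[of u y] dC_sym[of z u] dC_sym[of w u] Pc wu
    unfolding gromov_prod_def by (simp add: field_simps)
qed

lemma gprodC_sym: "y \<in> carrier G \<Longrightarrow> z \<in> carrier G \<Longrightarrow> gprodC w y z = gprodC w z y"
  unfolding gromov_prod_def by (simp add: dC_sym)

lemma cayley_geodesic_reverse: "cayley_geodesic P n \<Longrightarrow> cayley_geodesic (\<lambda>k. P (n - k)) n"
  unfolding cayley_geodesic_def by (auto simp: of_nat_diff)

text \<open>Project \<open>w\<close> and \<open>u\<close> to a
  geodesic \<open>[y, z]\<close>; the two possible orders of the projections are exchanged by reversing it.\<close>

lemma hyperbolic_if_slim:
  assumes slim: "slim_triangles K" and K0: "0 \<le> K"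
  shows "gromov_hyperbolic_on (carrier G) dC (2*(1 + 2*K))"
  unfolding gromov_hyperbolic_on_def
proof (intro ballI)
  fix w y z u assume c: "w \<in> carrier G" "y \<in> carrier G" "z \<in> carrier G" "u \<in> carrier G"
  define K' where "K' = 1 + 2*K"
  obtain P np where P: "cayley_geodesic P np" "P 0 = y" "P np = z"
    using cayley_geodesic_exists[OF c(2,3)] by blast
  obtain i where i: "i \<le> np" "dC w (P i) \<le> gprodC w y z + K'"
    using slim_projection[OF slim K0 P(1) c(1)] P unfolding K'_def by auto
  obtain j where j: "j \<le> np" "dC u (P j) \<le> gprodC u y z + K'"
    using slim_projection[OF slim K0 P(1) c(4)] P unfolding K'_def by auto
  show "min (gprodC w y u) (gprodC w u z) - 2*K' \<le> gprodC w y z"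
  proof (cases "i \<le> j")
    case True
    then show ?thesis using gprod_by_projections[OF P c(1,4) True j(1) i(2) j(2)] by linarith
  next
    case False
    have P': "cayley_geodesic (\<lambda>k. P (np - k)) np" "P (np - 0) = z" "P (np - np) = y"
      using cayley_geodesic_reverse[OF P(1)] P by auto
    have "gprodC w z u \<le> gprodC w z y + 2*K'"
      using gprod_by_projections[OF P' c(1,4), of "np - i" "np - j"] False i j
        gprodC_sym[OF c(2,3)] by simp
    then show ?thesis using gprodC_sym[OF c(2,3), of w] gprodC_sym[OF c(4,3), of w] by linarith
  qed
qed

end

section \<open>Orbit maps of actions satisfying (R2)\<close>

locale isometric_orbit = cayley_graph G "S \<union> stabilizer_pt G \<phi> x"
  for G :: "('g, 'b) monoid_scheme" (structure) and S :: "'g set"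
    and \<phi> :: "'g \<Rightarrow> 'x::metric_space \<Rightarrow> 'x" and x :: 'x +
  assumes finite_gens: "finite S" and isometric: "isometric_action G \<phi>"
begin

lemma group_action: "group_action G UNIV \<phi>"
  using isometric unfolding isometric_action_def by simp

lemma act_mult: "g \<in> carrier G \<Longrightarrow> h \<in> carrier G \<Longrightarrow> \<phi> (g \<otimes> h) y = \<phi> g (\<phi> h y)"
  using group_action.composition_rule[OF group_action] by simp

lemma act_one: "\<phi> \<one> y = y"
  using group_action.id_eq_one[OF group_action] by (metis UNIV_I restrict_apply')

lemma act_isometry: "g \<in> carrier G \<Longrightarrow> dist (\<phi> g y) (\<phi> g z) = dist y z"
  using isometric unfolding isometric_action_def by simp

lemma act_inv_dist:
  assumes "g \<in> carrier G" shows "dist (\<phi> g y) z = dist y (\<phi> (inv g) z)"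
proof -
  have "dist (\<phi> g y) z = dist (\<phi> (inv g) (\<phi> g y)) (\<phi> (inv g) z)" using assms by (simp add: act_isometry)
  also have "\<phi> (inv g) (\<phi> g y) = y" using assms act_mult[of "inv g" g y] by (simp add: act_one)
  finally show ?thesis .
qed

lemma orbit_dist: "g \<in> carrier G \<Longrightarrow> h \<in> carrier G \<Longrightarrow> dist (\<phi> g x) (\<phi> h x) = dist x (\<phi> (inv g \<otimes> h) x)"
  by (simp add: act_inv_dist act_mult)

text \<open>The orbit map \<open>g \<mapsto> g x\<close> is Lipschitz for the word metric, with constant the largest
  displacement of a generator (stabilizer elements do not move \<open>x\<close>).\<close>

definition lip_const :: real where
  "lip_const = Max (insert 0 ((\<lambda>s. dist x (\<phi> s x)) ` S))"

lemma lip_const_nonneg: "0 \<le> lip_const"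
  unfolding lip_const_def using finite_gens by simp

lemma letter_displacement: "a \<in> letters \<Longrightarrow> dist x (\<phi> a x) \<le> lip_const"
proof -
  have gen: "dist x (\<phi> s x) \<le> lip_const" if "s \<in> S \<union> stabilizer_pt G \<phi> x" for s
    using that finite_gens lip_const_nonneg unfolding lip_const_def stabilizer_pt_def by auto
  assume "a \<in> letters"
  then consider "a \<in> S \<union> stabilizer_pt G \<phi> x" | s where "s \<in> S \<union> stabilizer_pt G \<phi> x" "a = inv s"
    by blast
  then show ?thesis
  proof cases
    case 2
    then have "dist x (\<phi> a x) = dist x (\<phi> s x)"
      using act_inv_dist[of s x x] gens_closed by (auto simp: dist_commute)
    then show ?thesis using gen[OF 2(1)] by simp
  qed (rule gen)
qed

lemma word_displacement: "set ws \<subseteq> letters \<Longrightarrow> dist x (\<phi> (word_prod ws) x) \<le> lip_const * real (length ws)"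
proof (induction ws)
  case (Cons a ws)
  have a: "a \<in> carrier G" "a \<in> letters" using Cons letters_closed by auto
  have "word_prod ws \<in> carrier G" using Cons letters_closed by (intro word_prod_closed) auto
  then have "dist x (\<phi> (word_prod (a # ws)) x) = dist x (\<phi> a (\<phi> (word_prod ws) x))"
    by (simp add: word_prod_Cons act_mult[OF a(1)])
  also have "\<dots> \<le> dist x (\<phi> a x) + dist (\<phi> a x) (\<phi> a (\<phi> (word_prod ws) x))" by (rule dist_triangle)
  also have "\<dots> \<le> lip_const + lip_const * real (length ws)"
    using letter_displacement[OF a(2)] Cons by (simp add: act_isometry[OF a(1)])
  finally show ?case by (simp add: algebra_simps)
qed (simp add: act_one)

lemma orbit_lipschitz:
  assumes "g \<in> carrier G" "h \<in> carrier G"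
  shows "dist (\<phi> g x) (\<phi> h x) \<le> lip_const * dC g h"
proof -
  obtain ws where ws: "length ws = wl (inv g \<otimes> h)" "set ws \<subseteq> letters" "word_prod ws = inv g \<otimes> h"
    using shortest_word[of "inv g \<otimes> h"] assms by auto
  have "dist (\<phi> g x) (\<phi> h x) = dist x (\<phi> (word_prod ws) x)" using orbit_dist[OF assms] ws(3) by simp
  also have "\<dots> \<le> lip_const * real (length ws)" using word_displacement[OF ws(2)] .
  finally show ?thesis using ws(1) by (simp add: dC_eq)
qed

lemma proper_orbit:
  assumes "proper_rel G S \<phi> x"
  shows "\<exists>R. \<forall>g\<in>carrier G. \<forall>h\<in>carrier G. dist (\<phi> g x) (\<phi> h x) \<le> c \<longrightarrow> dC g h \<le> R"
proof -
  obtain R where R: "\<forall>g\<in>{g\<in>carrier G. dist x (\<phi> g x) \<le> real (nat \<lceil>c\<rceil>)}. dC \<one> g \<le> R"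
    using assms unfolding proper_rel_def by blast
  have "dC g h \<le> R" if gh: "g \<in> carrier G" "h \<in> carrier G" and c: "dist (\<phi> g x) (\<phi> h x) \<le> c" for g h
  proof -
    have "dist x (\<phi> (inv g \<otimes> h) x) \<le> real (nat \<lceil>c\<rceil>)" using c orbit_dist[OF gh] by linarith
    then have "dC \<one> (inv g \<otimes> h) \<le> R" using R gh by blast
    then show ?thesis using gh by (simp add: dC_eq)
  qed
  then show ?thesis by blast
qed

lemma gprod_translate:
  assumes g: "g \<in> carrier G" and h: "h \<in> carrier G"
  shows "gprod x (\<phi> (inv g) x) (\<phi> (inv g \<otimes> h) x) = dist x (\<phi> g x) - gprod x (\<phi> g x) (\<phi> h x)"
proof -
  have "dist (\<phi> (inv g) x) x = dist x (\<phi> g x)" using act_inv_dist[of "inv g" x x] g by simp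
  moreover have "dist (\<phi> (inv g \<otimes> h) x) x = dist (\<phi> h x) (\<phi> g x)"
    using act_inv_dist[of "inv g" "\<phi> h x" x] g h by (simp add: act_mult)
  moreover have "dist (\<phi> (inv g) x) (\<phi> (inv g \<otimes> h) x) = dist x (\<phi> h x)"
    using g h by (simp add: act_mult act_isometry)
  ultimately show ?thesis unfolding gromov_prod_def by (simp add: dist_commute field_simps)
qed

text \<open>Along a Cayley geodesic from \<open>\<one>\<close> to \<open>g\<close>, the Gromov product \<open>(g x\<cdot>h x)\<^sub>x\<close> grows from \<open>0\<close>
  to \<open>d(x, g x)\<close> in steps of at most \<open>lip_const\<close>, so it attains every level up to that precision.\<close>

lemma gprod_level_crossing:
  assumes g: "g \<in> carrier G" and \<theta>: "0 < \<theta>" "\<theta> \<le> dist x (\<phi> g x)"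
  shows "\<exists>h\<in>carrier G. \<theta> \<le> gprod x (\<phi> g x) (\<phi> h x) \<and> gprod x (\<phi> g x) (\<phi> h x) < \<theta> + lip_const"
proof -
  obtain p m where p: "cayley_geodesic p m" "p 0 = \<one>" "p m = g"
    using cayley_geodesic_exists[of \<one> g] g by auto
  have pc: "p i \<in> carrier G" for i using cayley_geodesic_closed[OF p(1)] .
  define b where "b i = gprod x (\<phi> g x) (\<phi> (p i) x)" for i
  have "\<forall>i<m. b (Suc i) \<le> b i + lip_const"
  proof (intro allI impI)
    fix i assume "i < m"
    have "b (Suc i) \<le> b i + dist (\<phi> (p (Suc i)) x) (\<phi> (p i) x)" unfolding b_def by (rule gprod_arg_lipschitz)
    moreover have "dC (p (Suc i)) (p i) = 1" using cayley_geodesic_dist[OF p(1)] \<open>i < m\<close> by simp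
    ultimately show "b (Suc i) \<le> b i + lip_const" using orbit_lipschitz[OF pc pc, of "Suc i" i] by simp
  qed
  moreover have "b 0 < \<theta>" "\<theta> \<le> b m"
    using p(2,3) \<theta> unfolding b_def gromov_prod_def by (simp_all add: act_one dist_commute)
  ultimately obtain i where "\<theta> \<le> b i" "b i < \<theta> + lip_const" using discrete_crossing by blast
  then show ?thesis using pc unfolding b_def by blast
qed

text \<open>The key use of condition (R2): if \<open>g x\<close> is far from \<open>x\<close>, choose \<open>h\<close> with \<open>(g x\<cdot>h x)\<^sub>x\<close>
  slightly less than \<open>d(x, g x) - 1\<close>; the element \<open>u\<close> provided by (R2) for \<open>g, h\<close> has its orbit
  point closer to \<open>x\<close> by at least \<open>1\<close>, at bounded distance from \<open>g x\<close>.\<close>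

lemma R2_descent:
  assumes R2: "R2_cond G \<phi> x \<delta> k" and \<delta>0: "0 \<le> \<delta>" and g: "g \<in> carrier G"
    and far: "1 + real k * \<delta> + lip_const < dist x (\<phi> g x)"
  shows "\<exists>u\<in>carrier G. dist x (\<phi> u x) < dist x (\<phi> g x) - 1 \<and>
           dist (\<phi> u x) (\<phi> g x) \<le> 1 + 2 * (real k * \<delta>) + lip_const"
proof -
  define \<theta> where "\<theta> = dist x (\<phi> g x) - 1 - real k * \<delta> - lip_const"
  have "0 \<le> real k * \<delta>" using \<delta>0 by simp
  then obtain h where h: "h \<in> carrier G" "\<theta> \<le> gprod x (\<phi> g x) (\<phi> h x)"
      "gprod x (\<phi> g x) (\<phi> h x) < \<theta> + lip_const"
    using gprod_level_crossing[OF g, of \<theta>] far lip_const_nonneg unfolding \<theta>_def by auto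
  obtain u where u: "u \<in> carrier G"
      "dist x (\<phi> u x) \<le> gprod x (\<phi> g x) (\<phi> h x) + real k * \<delta>"
      "dist x (\<phi> (inv u \<otimes> g) x) \<le> gprod x (\<phi> (inv g) x) (\<phi> (inv g \<otimes> h) x) + real k * \<delta>"
    using R2 g h(1) unfolding R2_cond_def by blast
  have "dist (\<phi> u x) (\<phi> g x) \<le> 1 + 2 * (real k * \<delta>) + lip_const"
    using u(3) h(2) orbit_dist[OF u(1) g] gprod_translate[OF g h(1)] unfolding \<theta>_def by simp
  moreover have "dist x (\<phi> u x) < dist x (\<phi> g x) - 1" using u(2) h(3) unfolding \<theta>_def by simp
  ultimately show ?thesis using u(1) by blast
qed

text \<open>Iterating the descent: the word length of \<open>g\<close> grows at most linearly with \<open>d(x, g x)\<close>.\<close>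

lemma word_length_by_descent:
  assumes R2: "R2_cond G \<phi> x \<delta> k" and \<delta>0: "0 \<le> \<delta>"
    and R0: "\<forall>g\<in>carrier G. dist x (\<phi> g x) \<le> 1 + real k * \<delta> + lip_const \<longrightarrow> dC \<one> g \<le> R0"
    and RE: "\<forall>g\<in>carrier G. \<forall>h\<in>carrier G.
               dist (\<phi> g x) (\<phi> h x) \<le> 1 + 2 * (real k * \<delta>) + lip_const \<longrightarrow> dC g h \<le> RE"
    and RE0: "0 \<le> RE"
  shows "g \<in> carrier G \<Longrightarrow> dist x (\<phi> g x) < real n \<Longrightarrow> dC \<one> g \<le> R0 + real n * RE"
proof (induction n arbitrary: g)
  case (Suc n)
  show ?case
  proof (cases "dist x (\<phi> g x) \<le> 1 + real k * \<delta> + lip_const")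
    case True
    then show ?thesis using R0 Suc.prems RE0 by (simp add: add_increasing2)
  next
    case False
    then obtain u where u: "u \<in> carrier G" "dist x (\<phi> u x) < dist x (\<phi> g x) - 1"
        "dist (\<phi> u x) (\<phi> g x) \<le> 1 + 2 * (real k * \<delta>) + lip_const"
      using R2_descent[OF R2 \<delta>0 Suc.prems(1)] by auto
    have "dC \<one> u \<le> R0 + real n * RE" using Suc u by simp
    moreover have "dC u g \<le> RE" using RE u Suc.prems(1) by blast
    moreover have "dC \<one> g \<le> dC \<one> u + dC u g" using u(1) Suc.prems(1) by (intro dC_triangle) auto
    ultimately show ?thesis by (simp add: algebra_simps)
  qed
qed (simp add: not_less)

text \<open>Hence the word metric is bounded above by an affine function of the distance between orbit
  points: together with \<open>orbit_lipschitz\<close>, the orbit map is a quasi-isometric embedding.\<close>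

lemma word_metric_orbit_bound:
  assumes proper: "proper_rel G S \<phi> x" and R2: "R2_cond G \<phi> x \<delta> k" and \<delta>0: "0 \<le> \<delta>"
  shows "\<exists>A B. 0 \<le> A \<and> 0 \<le> B \<and>
           (\<forall>g\<in>carrier G. \<forall>h\<in>carrier G. dC g h \<le> A * dist (\<phi> g x) (\<phi> h x) + B)"
proof -
  have kd0: "0 \<le> real k * \<delta>" using \<delta>0 by simp
  obtain RE where RE: "\<forall>g\<in>carrier G. \<forall>h\<in>carrier G.
      dist (\<phi> g x) (\<phi> h x) \<le> 1 + 2 * (real k * \<delta>) + lip_const \<longrightarrow> dC g h \<le> RE"
    using proper_orbit[OF proper] by blast
  obtain R0 where R0: "\<forall>g\<in>carrier G. \<forall>h\<in>carrier G.
      dist (\<phi> g x) (\<phi> h x) \<le> 1 + real k * \<delta> + lip_const \<longrightarrow> dC g h \<le> R0"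
    using proper_orbit[OF proper] by blast
  have RE0: "0 \<le> RE" and R00: "0 \<le> R0"
    using RE[rule_format, of \<one> \<one>] R0[rule_format, of \<one> \<one>] kd0 lip_const_nonneg by (simp_all add: dC_refl)
  have "dC g h \<le> RE * dist (\<phi> g x) (\<phi> h x) + (R0 + RE)" if gh: "g \<in> carrier G" "h \<in> carrier G" for g h
  proof -
    define n where "n = nat \<lfloor>dist (\<phi> g x) (\<phi> h x)\<rfloor> + 1"
    have n: "dist (\<phi> g x) (\<phi> h x) < real n" "real n \<le> dist (\<phi> g x) (\<phi> h x) + 1"
      unfolding n_def by (linarith, simp add: of_nat_nat)
    have "dC \<one> (inv g \<otimes> h) \<le> R0 + real n * RE"
      using word_length_by_descent[OF R2 \<delta>0 _ RE RE0, of R0 "inv g \<otimes> h" n] R0 gh n(1)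
      by (simp add: orbit_dist act_one)
    moreover have "real n * RE \<le> (dist (\<phi> g x) (\<phi> h x) + 1) * RE" using n(2) RE0 by (rule mult_right_mono)
    ultimately show ?thesis using gh by (simp add: dC_eq algebra_simps)
  qed
  then show ?thesis using RE0 R00 by (intro exI[of _ RE] exI[of _ "R0 + RE"]) auto
qed

lemma orbit_quasi_geodesic:
  assumes AB: "\<forall>g\<in>carrier G. \<forall>h\<in>carrier G. dC g h \<le> A * dist (\<phi> g x) (\<phi> h x) + B"
    and p: "cayley_geodesic p n"
  shows "quasi_geodesic (\<lambda>i. \<phi> (p i) x) n lip_const A B"
  unfolding quasi_geodesic_def
proof (intro allI impI conjI)
  fix i j assume "i \<le> n" "j \<le> n"
  then have e: "dC (p i) (p j) = \<bar>real i - real j\<bar>" using cayley_geodesic_dist[OF p] by blast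
  have pc: "p i \<in> carrier G" "p j \<in> carrier G" using cayley_geodesic_closed[OF p] by auto
  show "dist (\<phi> (p i) x) (\<phi> (p j) x) \<le> lip_const * \<bar>real i - real j\<bar>"
    using orbit_lipschitz[OF pc] e by simp
  show "\<bar>real i - real j\<bar> \<le> A * dist (\<phi> (p i) x) (\<phi> (p j) x) + B"
    using AB pc e by metis
qed

text \<open>Map the triangle to \<open>X\<close>; its
  sides become quasi-geodesics.  A point \<open>V\<close> on the first side is close to a geodesic between the
  ends of that side (Morse lemma), so by the four-point condition it has small Gromov product with
  respect to the ends of one of the other sides, hence is close to that side (Morse lemma again);
  properness brings the estimate back to the Cayley graph.\<close>

lemma slim_triangles_exist:
  assumes hyp: "gromov_hyperbolic_on (UNIV::'x set) dist \<delta>" and \<delta>0: "0 \<le> \<delta>"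
    and geo: "geodesic_space TYPE('x)"
    and proper: "proper_rel G S \<phi> x" and R2: "R2_cond G \<phi> x \<delta> k"
  shows "\<exists>K. 0 \<le> K \<and> slim_triangles K"
proof -
  obtain A B where AB: "0 \<le> A" "\<forall>g\<in>carrier G. \<forall>h\<in>carrier G. dC g h \<le> A * dist (\<phi> g x) (\<phi> h x) + B"
    using word_metric_orbit_bound[OF proper R2 \<delta>0] by blast
  note qg = orbit_quasi_geodesic[OF AB(2)]
  obtain H where H: "\<forall>n (q::nat \<Rightarrow> 'x). quasi_geodesic q n lip_const A B \<longrightarrow>
      (\<forall>i\<le>n. gprod (q i) (q 0) (q n) \<le> H)"
    using quasi_geodesic_near_geodesic[OF hyp \<delta>0 geo lip_const_nonneg AB(1)] by blast
  obtain M where M: "\<forall>n (q::nat \<Rightarrow> 'x). quasi_geodesic q n lip_const A B \<longrightarrow>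
      (\<forall>w. gprod w (q 0) (q n) \<le> H + \<delta> \<longrightarrow> (\<exists>i\<le>n. dist w (q i) \<le> M))"
    using small_gprod_near_quasi_geodesic[OF hyp \<delta>0 geo lip_const_nonneg AB(1)] by blast
  obtain K0 where K0: "\<forall>g\<in>carrier G. \<forall>h\<in>carrier G. dist (\<phi> g x) (\<phi> h x) \<le> M \<longrightarrow> dC g h \<le> K0"
    using proper_orbit[OF proper] by blast
  define K where "K = max K0 0"
  have K: "\<forall>g\<in>carrier G. \<forall>h\<in>carrier G. dist (\<phi> g x) (\<phi> h x) \<le> M \<longrightarrow> dC g h \<le> K"
    using K0 unfolding K_def by (simp add: le_max_iff_disj)
  have near_side: "\<exists>i\<le>np. dC g (P i) \<le> K"
    if "cayley_geodesic P np" "g \<in> carrier G" "gprod (\<phi> g x) (\<phi> (P 0) x) (\<phi> (P np) x) \<le> H + \<delta>"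
    for P np g
    using M qg[OF that(1)] that K cayley_geodesic_closed[OF that(1)] by blast
  have "(\<exists>i\<le>nr. dC (Q t) (R i) \<le> K) \<or> (\<exists>i\<le>np. dC (Q t) (P i) \<le> K)"
    if h: "cayley_geodesic Q nq" "cayley_geodesic R nr" "cayley_geodesic P np"
      "R 0 = Q 0" "P 0 = Q nq" "P np = R nr" and t: "t \<le> nq"
    for Q nq R nr P np t
  proof -
    define V where "V = \<phi> (Q t) x"
    have "gprod V (\<phi> (Q 0) x) (\<phi> (Q nq) x) \<le> H" using H qg[OF h(1)] t unfolding V_def by blast
    moreover have "min (gprod V (\<phi> (Q 0) x) (\<phi> (R nr) x)) (gprod V (\<phi> (R nr) x) (\<phi> (Q nq) x)) - \<delta>
        \<le> gprod V (\<phi> (Q 0) x) (\<phi> (Q nq) x)" by (rule hyperbolic_four_point[OF hyp])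
    ultimately have "gprod V (\<phi> (R 0) x) (\<phi> (R nr) x) \<le> H + \<delta> \<or> gprod V (\<phi> (P 0) x) (\<phi> (P np) x) \<le> H + \<delta>"
      using h(4-6) gprod_sym[of V "\<phi> (R nr) x" "\<phi> (Q nq) x"] by auto
    then show ?thesis
      using near_side[OF h(2)] near_side[OF h(3)] cayley_geodesic_closed[OF h(1)] unfolding V_def by blast
  qed
  moreover have "0 \<le> K" unfolding K_def by simp
  ultimately show ?thesis unfolding slim_triangles_def by blast
qed

end

theorem mainTheorem17:
  fixes G :: "('g, 'b) monoid_scheme" and S :: "'g set"
    and \<phi> :: "'g \<Rightarrow> 'x::metric_space \<Rightarrow> 'x" and x :: 'x and \<delta> :: real and k :: nat
  assumes "group G" and "finite S" and "S \<subseteq> carrier G" and "generate G S = carrier G"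
    and "isometric_action G \<phi>"
    and "geodesic_space TYPE('x)"
    and "\<delta> \<ge> 0" and "gromov_hyperbolic_on (UNIV::'x set) dist \<delta>"
    and "proper_rel G S \<phi> x"
    and "R2_cond G \<phi> x \<delta> k"
  shows "\<exists>\<delta>'. gromov_hyperbolic_on (carrier G) (cayley_dist G (S \<union> stabilizer_pt G \<phi> x)) \<delta>'"
proof -
  interpret group G by fact
  have gens: "S \<union> stabilizer_pt G \<phi> x \<subseteq> carrier G"
    using \<open>S \<subseteq> carrier G\<close> unfolding stabilizer_pt_def by auto
  have "generate G (S \<union> stabilizer_pt G \<phi> x) = carrier G"
    using generate_incl[OF gens] mono_generate[of S "S \<union> stabilizer_pt G \<phi> x"] assms(4) by auto
  then interpret isometric_orbit G S \<phi> x
    using assms gens by unfold_locales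
  obtain K where "0 \<le> K" "slim_triangles K"
    using slim_triangles_exist assms by blast
  then show ?thesis using hyperbolic_if_slim by blast
qed

end
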